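(* Let $\hat n_1,\hat n_2,\hat n_3$ be unit vectors in the $ZX$ plane of $\mathbb{R}^3$ (i.e. with vanishing $y$-component) forming trine axes, $\hat n_i\cdot\hat n_j=-1/2$ for $i\neq j$, and let $\eta$ satisfy $\tfrac23<\eta\le\sqrt3-1$. For $k\in\{1,2,3\}$ let $E^k_{\pm}=\tfrac12 I\pm\tfrac{\eta}{2}\vec\sigma\cdot\hat n_k$. Consider the quantity $$S(\rho,G)=\frac13\sum_{(ij)\in\{(12),(23),(13)\}}\mathrm{Tr}\big(\rho\,(G^{ij}_{+-}+G^{ij}_{-+})\big)-\Big(1-\frac{\eta}{3}\Big),$$ where $\rho$ ranges over qubit density operators and $G=(G_{12},G_{23},G_{13})$ over pairwise joint measurements. Then the maximum of $S$ is attained at $\rho=|\psi\rangle\langle\psi|$ with $|\psi\rangle=\tfrac1{\sqrt2}(|0\rangle+i|1\rangle)$ and the joint measurements with parameters $\alpha_{ij}=1+\eta^2\hat n_i\cdot\hat n_j$ and $\vec a_{ij}=\big(0,\sqrt{1+\eta^4(\hat n_i\cdot\hat n_j)^2-2\eta^2},0\big)$ for all pairs. Moreover, as $\eta\to\tfrac23$ this optimal violation tends to its supremum over the allowed range of $\eta$: then $\alpha_{ij}\to\tfrac79$, $|\vec a_{ij}|\to\tfrac{\sqrt{13}}{9}$, and the maximal value of $S$ tends to $\tfrac16\big(\tfrac{\sqrt{13}}{3}-1\big)\approx 0.03364$.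
   Context: $\vec\sigma=(\sigma_x,\sigma_y,\sigma_z)$ are the Pauli matrices, $I$ the $2\times2$ identity, $|0\rangle,|1\rangle$ the eigenvectors of $\sigma_z$. A pairwise joint measurement of $\{E^i_\pm\}$ and $\{E^j_\pm\}$ is a qubit POVM $G_{ij}=\{G^{ij}_{X_iX_j}\}_{X_i,X_j\in\{+,-\}}$ with $\sum_{X_j}G^{ij}_{X_iX_j}=E^i_{X_i}$ and $\sum_{X_i}G^{ij}_{X_iX_j}=E^j_{X_j}$. Every such joint measurement has the form $G^{ij}_{++}=\tfrac12\big[\tfrac{\alpha_{ij}}{2}I+\tfrac12\vec\sigma\cdot(\eta(\hat n_i+\hat n_j)-\vec a_{ij})\big]$, $G^{ij}_{+-}=\tfrac12\big[(1-\tfrac{\alpha_{ij}}{2})I+\tfrac12\vec\sigma\cdot(\eta(\hat n_i-\hat n_j)+\vec a_{ij})\big]$, $G^{ij}_{-+}=\tfrac12\big[(1-\tfrac{\alpha_{ij}}{2})I+\tfrac12\vec\sigma\cdot(\eta(-\hat n_i+\hat n_j)+\vec a_{ij})\big]$, $G^{ij}_{--}=\tfrac12\big[\tfrac{\alpha_{ij}}{2}I+\tfrac12\vec\sigma\cdot(-\eta(\hat n_i+\hat n_j)-\vec a_{ij})\big]$ for some $\alpha_{ij}\in\mathbb R$, $\vec a_{ij}\in\mathbb R^3$ (subject to positivity). The range $\tfrac23<\eta\le\sqrt3-1$ is exactly the range in which the three POVMs are pairwise but not triplewise jointly measurable. *)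

theory Defs
  imports "HOL-Analysis.Analysis"
begin

text \<open>Qubit operators are 2x2 complex matrices (type complex^2^2, indices 1 and 2);
  vectors of R^3 are real^3 with components x = $1, y = $2, z = $3.
  Matrix product is **, scalar multiplication of matrices is scal, of vectors *s.\<close>

definition mat2 :: "complex \<Rightarrow> complex \<Rightarrow> complex \<Rightarrow> complex \<Rightarrow> complex^2^2" where
  "mat2 a b c d = (\<chi> i j. if i = 1 then (if j = 1 then a else b) else (if j = 1 then c else d))"

definition scal :: "complex \<Rightarrow> complex^2^2 \<Rightarrow> complex^2^2" (infixr "*\<^sub>M" 75) where
  "c *\<^sub>M A = (\<chi> i j. c * A$i$j)"

definition Id2 :: "complex^2^2" where "Id2 = mat 1"

definition sigma_x :: "complex^2^2" where "sigma_x = mat2 0 1 1 0"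
definition sigma_y :: "complex^2^2" where "sigma_y = mat2 0 (-\<i>) \<i> 0"
definition sigma_z :: "complex^2^2" where "sigma_z = mat2 1 0 0 (-1)"

definition sigma_dot :: "real^3 \<Rightarrow> complex^2^2" where
  "sigma_dot v = complex_of_real (v$1) *\<^sub>M sigma_x
     + complex_of_real (v$2) *\<^sub>M sigma_y + complex_of_real (v$3) *\<^sub>M sigma_z"

definition psd :: "complex^2^2 \<Rightarrow> bool" where
  "psd A \<longleftrightarrow> (\<forall>i j. A$i$j = cnj (A$j$i)) \<and>
     (\<forall>v::complex^2. 0 \<le> Re (\<Sum>i\<in>UNIV. cnj (v$i) * (A *v v)$i))"

definition density :: "complex^2^2 \<Rightarrow> bool" where
  "density \<rho> \<longleftrightarrow> psd \<rho> \<and> trace \<rho> = 1"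

definition ket0 :: "complex^2" where "ket0 = (\<chi> i. if i = 1 then 1 else 0)"
definition ket1 :: "complex^2" where "ket1 = (\<chi> i. if i = 1 then 0 else 1)"
definition proj :: "complex^2 \<Rightarrow> complex^2^2" where
  "proj \<psi> = (\<chi> i j. \<psi>$i * cnj (\<psi>$j))"

text \<open>Outcomes: True stands for +, False for -.
  The dichotomic POVM E^k_{+-} = I/2 +- (eta/2) sigma.n_k.\<close>
definition E :: "real \<Rightarrow> real^3 \<Rightarrow> bool \<Rightarrow> complex^2^2" where
  "E \<eta> n x = (1/2) *\<^sub>M Id2 + (if x then 1 else -1) * complex_of_real (\<eta>/2) *\<^sub>M sigma_dot n"

definition povm4 :: "(bool \<Rightarrow> bool \<Rightarrow> complex^2^2) \<Rightarrow> bool" where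
  "povm4 G \<longleftrightarrow> (\<forall>x y. psd (G x y)) \<and> G True True + G True False + G False True + G False False = Id2"

definition joint_meas :: "real \<Rightarrow> real^3 \<Rightarrow> real^3 \<Rightarrow> (bool \<Rightarrow> bool \<Rightarrow> complex^2^2) \<Rightarrow> bool" where
  "joint_meas \<eta> ni nj G \<longleftrightarrow> povm4 G \<and>
     (\<forall>x. G x True + G x False = E \<eta> ni x) \<and>
     (\<forall>y. G True y + G False y = E \<eta> nj y)"

definition Gpar :: "real \<Rightarrow> real^3 \<Rightarrow> real^3 \<Rightarrow> real \<Rightarrow> real^3 \<Rightarrow> bool \<Rightarrow> bool \<Rightarrow> complex^2^2" where
  "Gpar \<eta> ni nj \<alpha> a x y =
    (if x \<and> y then (1/2) *\<^sub>M (complex_of_real (\<alpha>/2) *\<^sub>M Id2 + (1/2) *\<^sub>M sigma_dot (\<eta> *\<^sub>R (ni + nj) - a))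
     else if x \<and> \<not> y then (1/2) *\<^sub>M (complex_of_real (1 - \<alpha>/2) *\<^sub>M Id2 + (1/2) *\<^sub>M sigma_dot (\<eta> *\<^sub>R (ni - nj) + a))
     else if \<not> x \<and> y then (1/2) *\<^sub>M (complex_of_real (1 - \<alpha>/2) *\<^sub>M Id2 + (1/2) *\<^sub>M sigma_dot (\<eta> *\<^sub>R (nj - ni) + a))
     else (1/2) *\<^sub>M (complex_of_real (\<alpha>/2) *\<^sub>M Id2 + (1/2) *\<^sub>M sigma_dot (- (\<eta> *\<^sub>R (ni + nj)) - a)))"

definition S :: "real \<Rightarrow> complex^2^2 \<Rightarrow> (bool \<Rightarrow> bool \<Rightarrow> complex^2^2) \<Rightarrow>
    (bool \<Rightarrow> bool \<Rightarrow> complex^2^2) \<Rightarrow> (bool \<Rightarrow> bool \<Rightarrow> complex^2^2) \<Rightarrow> real" where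
  "S \<eta> \<rho> G12 G23 G13 =
     (1/3) * (Re (trace (\<rho> ** (G12 True False + G12 False True)))
            + Re (trace (\<rho> ** (G23 True False + G23 False True)))
            + Re (trace (\<rho> ** (G13 True False + G13 False True))))
     - (1 - \<eta>/3)"

definition alpha_opt :: "real \<Rightarrow> real^3 \<Rightarrow> real^3 \<Rightarrow> real" where
  "alpha_opt \<eta> ni nj = 1 + \<eta>^2 * (ni \<bullet> nj)"

definition a_opt :: "real \<Rightarrow> real^3 \<Rightarrow> real^3 \<Rightarrow> real^3" where
  "a_opt \<eta> ni nj = vector [0, sqrt (1 + \<eta>^4 * (ni \<bullet> nj)^2 - 2 * \<eta>^2), 0]"

definition psi_opt :: "complex^2" where
  "psi_opt = complex_of_real (1 / sqrt 2) *s (ket0 + \<i> *s ket1)"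

definition G_opt :: "real \<Rightarrow> real^3 \<Rightarrow> real^3 \<Rightarrow> bool \<Rightarrow> bool \<Rightarrow> complex^2^2" where
  "G_opt \<eta> ni nj = Gpar \<eta> ni nj (alpha_opt \<eta> ni nj) (a_opt \<eta> ni nj)"

end

theory Submission
  imports Defs
begin

text \<open>Write a qubit operator as \<open>b\<^sub>0 I + \<sigma>\<cdot>b\<close>. It is positive iff \<open>|b| \<le> b\<^sub>0\<close>, and
  \<open>Tr(AB) = 2(a\<^sub>0 b\<^sub>0 + a\<cdot>b)\<close>. For a joint measurement of \<open>E\<^sup>i\<close> and \<open>E\<^sup>j\<close> the marginal
  conditions determine all four effects from the Bloch coordinates \<open>(t/2, x)\<close> of \<open>G\<^sub>+\<^sub>+\<close>, and
  \<open>Tr(\<rho>(G\<^sub>+\<^sub>- + G\<^sub>-\<^sub>+)) = 1 - t + 2 r\<cdot>z \<le> 1 - t + |z|\<close>, where \<open>z\<close> is the Bloch vector of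
  \<open>G\<^sub>+\<^sub>- + G\<^sub>-\<^sub>+\<close>. Positivity of the four effects says that \<open>z\<close> lies within \<open>t\<close> of
  \<open>\<plusminus>u\<close> and within \<open>1 - t\<close> of \<open>\<plusminus>v\<close>, with \<open>u = \<eta>(n\<^sub>i + n\<^sub>j)/2\<close> and \<open>v = \<eta>(n\<^sub>i - n\<^sub>j)/2\<close>;
  by the parallelogram law \<open>|z|\<^sup>2 + |u|\<^sup>2 \<le> t\<^sup>2\<close> and \<open>|z|\<^sup>2 + |v|\<^sup>2 \<le> (1 - t)\<^sup>2\<close>, and minimising
  \<open>t - |z|\<close> under these two constraints gives a bound on each pair that depends only on \<open>\<eta>\<close>
  and \<open>n\<^sub>i\<cdot>n\<^sub>j\<close>. The state polarised along \<open>y\<close> together with the measurements whose vector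
  \<open>a\<^sub>i\<^sub>j\<close> points along \<open>y\<close>, orthogonally to the plane of the axes, attains this bound for all
  three pairs at once, so it maximises \<open>S\<close>. The statements about \<open>\<eta> \<rightarrow> 2/3\<close> are continuity,
  and the bound on the optimal violation is a polynomial inequality in \<open>\<eta>\<close>.\<close>

section \<open>Bloch coordinates of qubit operators\<close>

lemma mat2_entries: "(A::complex^2^2) = mat2 (A$1$1) (A$1$2) (A$2$1) (A$2$2)"
  unfolding mat2_def by (simp add: vec_eq_iff forall_2)

lemma mat2_nth [simp]:
  "mat2 a b c d $1$1 = a" "mat2 a b c d $1$2 = b" "mat2 a b c d $2$1 = c" "mat2 a b c d $2$2 = d"
  by (simp_all add: mat2_def)

lemma mat2_eq_iff: "mat2 a b c d = mat2 a' b' c' d' \<longleftrightarrow> a = a' \<and> b = b' \<and> c = c' \<and> d = d'"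
  by (metis mat2_nth)

lemma mat2_add: "mat2 a b c d + mat2 a' b' c' d' = mat2 (a+a') (b+b') (c+c') (d+d')"
  by (simp add: mat2_def vec_eq_iff forall_2)

lemma scal_mat2: "k *\<^sub>M mat2 a b c d = mat2 (k*a) (k*b) (k*c) (k*d)"
  by (simp add: scal_def mat2_def vec_eq_iff forall_2)

lemma mat2_mult: "mat2 a b c d ** mat2 e f g h = mat2 (a*e+b*g) (a*f+b*h) (c*e+d*g) (c*f+d*h)"
  by (simp add: mat2_def vec_eq_iff forall_2 matrix_matrix_mult_def sum_2)

lemma trace_mat2: "trace (mat2 a b c d) = a + d"
  by (simp add: trace_def sum_2)

lemma Id2_mat2: "Id2 = mat2 1 0 0 1"
  by (subst mat2_entries) (simp add: Id2_def mat_def)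

lemma sigma_dot_mat2: "sigma_dot v = mat2 (of_real (v$3)) (of_real (v$1) - \<i> * of_real (v$2))
   (of_real (v$1) + \<i> * of_real (v$2)) (- of_real (v$3))"
  unfolding sigma_dot_def sigma_x_def sigma_y_def sigma_z_def
  by (simp add: scal_mat2 mat2_add algebra_simps)

definition hermitian :: "complex^2^2 \<Rightarrow> bool" where
  "hermitian A \<longleftrightarrow> (\<forall>i j. A$i$j = cnj (A$j$i))"

definition bloch_scalar :: "complex^2^2 \<Rightarrow> real" where
  "bloch_scalar A = Re (A$1$1 + A$2$2) / 2"

definition bloch_vector :: "complex^2^2 \<Rightarrow> real^3" where
  "bloch_vector A = vector [Re (A$1$2 + A$2$1) / 2, Im (A$2$1 - A$1$2) / 2, Re (A$1$1 - A$2$2) / 2]"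

lemma vec3_eq_iff: "(x::real^3) = y \<longleftrightarrow> x$1 = y$1 \<and> x$2 = y$2 \<and> x$3 = y$3"
  by (simp add: vec_eq_iff forall_3)

lemma inner_vec3: "(x::real^3) \<bullet> y = x$1*y$1 + x$2*y$2 + x$3*y$3"
  by (simp add: inner_vec_def sum_3)

lemma hermitian_mat2_iff: "hermitian (mat2 a b c d) \<longleftrightarrow> Im a = 0 \<and> Im d = 0 \<and> b = cnj c"
  unfolding hermitian_def by (auto simp: forall_2 complex_eq_iff)

lemma bloch_decomposition:
  assumes "hermitian A"
  shows "A = of_real (bloch_scalar A) *\<^sub>M Id2 + sigma_dot (bloch_vector A)"
proof -
  have "Im (A$1$1) = 0" "Im (A$2$2) = 0" "A$1$2 = cnj (A$2$1)"
    using assms mat2_entries[of A] hermitian_mat2_iff by metis+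
  then show ?thesis
    by (subst mat2_entries)
      (simp add: Id2_mat2 sigma_dot_mat2 scal_mat2 mat2_add bloch_scalar_def bloch_vector_def
        mat2_eq_iff complex_eq_iff add_divide_distrib diff_divide_distrib)
qed

lemma hermitian_eqI:
  assumes "hermitian A" "hermitian B" "bloch_scalar A = bloch_scalar B" "bloch_vector A = bloch_vector B"
  shows "A = B"
  by (metis assms bloch_decomposition)

lemma hermitian_add: "hermitian A \<Longrightarrow> hermitian B \<Longrightarrow> hermitian (A + B)"
  unfolding hermitian_def by (metis complex_cnj_add vector_add_component)

lemma hermitian_scal:
  assumes "Im c = 0" "hermitian A"
  shows "hermitian (c *\<^sub>M A)"
proof -
  have "cnj c = c" using assms(1) by (simp add: complex_eq_iff)
  then have "c * A$i$j = cnj (c * A$j$i)" for i j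
    using assms(2) unfolding hermitian_def by (metis complex_cnj_mult)
  then show ?thesis unfolding hermitian_def scal_def vec_lambda_beta by blast
qed

lemma bloch_scalar_add: "bloch_scalar (A + B) = bloch_scalar A + bloch_scalar B"
  by (simp add: bloch_scalar_def field_simps)

lemma bloch_vector_add: "bloch_vector (A + B) = bloch_vector A + bloch_vector B"
  by (simp add: bloch_vector_def vec3_eq_iff field_simps)

lemma bloch_scalar_scal: "Im c = 0 \<Longrightarrow> bloch_scalar (c *\<^sub>M A) = Re c * bloch_scalar A"
  by (simp add: bloch_scalar_def scal_def field_simps)

lemma bloch_vector_scal: "Im c = 0 \<Longrightarrow> bloch_vector (c *\<^sub>M A) = Re c *\<^sub>R bloch_vector A"
  by (simp add: bloch_vector_def scal_def vec3_eq_iff field_simps)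

lemma bloch_Id2: "hermitian Id2" "bloch_scalar Id2 = 1" "bloch_vector Id2 = 0"
  by (simp_all add: Id2_mat2 hermitian_mat2_iff bloch_scalar_def bloch_vector_def vec3_eq_iff)

lemma bloch_sigma_dot:
  "hermitian (sigma_dot w)" "bloch_scalar (sigma_dot w) = 0" "bloch_vector (sigma_dot w) = w"
  by (simp_all add: sigma_dot_mat2 hermitian_mat2_iff bloch_scalar_def bloch_vector_def vec3_eq_iff)

lemmas bloch_simps = hermitian_add hermitian_scal bloch_scalar_add bloch_vector_add
  bloch_scalar_scal bloch_vector_scal bloch_Id2 bloch_sigma_dot

lemma trace_mult_sigma:
  "Re (trace ((of_real s *\<^sub>M Id2 + sigma_dot v) ** (of_real t *\<^sub>M Id2 + sigma_dot w)))
     = 2 * (s * t + v \<bullet> w)"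
  by (simp add: Id2_mat2 sigma_dot_mat2 scal_mat2 mat2_add mat2_mult trace_mat2 inner_vec3 algebra_simps)

lemma trace_mult_bloch:
  assumes "hermitian A" "hermitian B"
  shows "Re (trace (A ** B)) = 2 * (bloch_scalar A * bloch_scalar B + bloch_vector A \<bullet> bloch_vector B)"
  by (subst bloch_decomposition[OF assms(1)], subst bloch_decomposition[OF assms(2)], rule trace_mult_sigma)

lemma cmod_mult_self: "cmod z * cmod z = Re z * Re z + Im z * Im z"
  by (metis cmod_power2 power2_eq_square)

lemma hermitian_form_nonneg_iff:
  "(\<forall>x y. 0 \<le> p * (cmod x)^2 + w * (cmod y)^2 + 2 * Re (cnj x * b * y))
     \<longleftrightarrow> 0 \<le> p \<and> 0 \<le> w \<and> (cmod b)^2 \<le> p * w"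
    (is "(\<forall>x y. 0 \<le> ?q x y) \<longleftrightarrow> _")
proof
  assume q: "\<forall>x y. 0 \<le> ?q x y"
  have p: "0 \<le> p" using q[rule_format, of 1 0] by simp
  have w: "0 \<le> w" using q[rule_format, of 0 1] by simp
  have "?q (- b) (of_real p) = p * (p * w - (cmod b)^2)"
    by (simp add: cmod_mult_self power2_eq_square algebra_simps)
  moreover have "?q (of_real w) (- cnj b) = w * (p * w - (cmod b)^2)"
    by (simp add: cmod_mult_self power2_eq_square algebra_simps)
  moreover have "?q 1 (- cnj b) = p + (w - 2) * (cmod b)^2"
    by (simp add: cmod_mult_self power2_eq_square algebra_simps)
  ultimately have e: "0 \<le> p * (p * w - (cmod b)^2)" "0 \<le> w * (p * w - (cmod b)^2)"
    "0 \<le> p + (w - 2) * (cmod b)^2"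
    using q by metis+
  consider "p > 0" | "w > 0" | "p = 0" "w = 0" using p w by linarith
  then have "(cmod b)^2 \<le> p * w"
    by cases (use e in \<open>auto simp: zero_le_mult_iff\<close>)
  with p w show "0 \<le> p \<and> 0 \<le> w \<and> (cmod b)^2 \<le> p * w" by simp
next
  assume H: "0 \<le> p \<and> 0 \<le> w \<and> (cmod b)^2 \<le> p * w"
  show "\<forall>x y. 0 \<le> ?q x y"
  proof (intro allI)
    fix x y
    show "0 \<le> ?q x y"
    proof (cases "p = 0")
      case True
      with H show ?thesis by simp
    next
      case False
      have "p * ?q x y = (cmod (of_real p * x + b * y))^2 + (p * w - (cmod b)^2) * (cmod y)^2"
        by (simp add: cmod_mult_self power2_eq_square algebra_simps)
      also have "0 \<le> \<dots>" using H by simp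
      finally show ?thesis using H False by (simp add: zero_le_mult_iff)
    qed
  qed
qed

lemma forall_vector_2: "(\<forall>v::'a^2. P (v$1) (v$2)) \<longleftrightarrow> (\<forall>x y. P x y)"
proof
  assume "\<forall>v::'a^2. P (v$1) (v$2)"
  show "\<forall>x y. P x y"
  proof (intro allI)
    fix x y
    show "P x y"
      using \<open>\<forall>v::'a^2. P (v$1) (v$2)\<close>[rule_format, of "\<chi> i. if i = 1 then x else y"] by simp
  qed
qed blast

lemma psd_iff_quadratic_form:
  "psd A \<longleftrightarrow> hermitian A \<and> (\<forall>v. 0 \<le> Re (\<Sum>i\<in>UNIV. cnj (v$i) * (A *v v)$i))"
  by (simp add: psd_def hermitian_def)

lemma psd_mat2_iff:
  "psd (mat2 (of_real p) b (cnj b) (of_real w)) \<longleftrightarrow> 0 \<le> p \<and> 0 \<le> w \<and> (cmod b)^2 \<le> p * w"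
    (is "psd ?M \<longleftrightarrow> _")
proof -
  have form: "Re (\<Sum>i\<in>UNIV. cnj (v$i) * (?M *v v)$i)
      = p * (cmod (v$1))^2 + w * (cmod (v$2))^2 + 2 * Re (cnj (v$1) * b * v$2)" for v :: "complex^2"
    by (simp add: sum_2 matrix_vector_mult_def cmod_mult_self power2_eq_square algebra_simps)
  show ?thesis
    unfolding psd_iff_quadratic_form form
      forall_vector_2[where P = "\<lambda>x y. 0 \<le> p * (cmod x)^2 + w * (cmod y)^2 + 2 * Re (cnj x * b * y)"]
      hermitian_form_nonneg_iff
    by (simp add: hermitian_mat2_iff)
qed

lemma psd_bloch_form_iff: "psd (of_real s *\<^sub>M Id2 + sigma_dot v) \<longleftrightarrow> norm v \<le> s"
proof -
  let ?b = "of_real (v$1) - \<i> * of_real (v$2)"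
  define r where "r = (v$1)^2 + (v$2)^2"
  have M: "of_real s *\<^sub>M Id2 + sigma_dot v = mat2 (of_real (s + v$3)) ?b (cnj ?b) (of_real (s - v$3))"
    by (simp add: Id2_mat2 sigma_dot_mat2 scal_mat2 mat2_add mat2_eq_iff)
  have b: "(cmod ?b)^2 = r"
    by (simp add: cmod_power2 r_def)
  have prod: "(s + v$3) * (s - v$3) = s^2 - (v$3)^2"
    by (simp add: power2_eq_square algebra_simps)
  have "(v$3)^2 \<le> s^2 \<Longrightarrow> 0 \<le> s \<Longrightarrow> \<bar>v$3\<bar> \<le> s"
    using abs_le_square_iff[of "v$3" s] by simp
  moreover have "0 \<le> r" by (simp add: r_def)
  ultimately have "(0 \<le> s + v$3 \<and> 0 \<le> s - v$3 \<and> r \<le> (s + v$3) * (s - v$3))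
      \<longleftrightarrow> (0 \<le> s \<and> r + (v$3)^2 \<le> s^2)"
    unfolding prod by (auto simp: abs_le_iff)
  moreover have "v \<bullet> v = r + (v$3)^2"
    by (simp add: inner_vec3 r_def power2_eq_square)
  ultimately show ?thesis
    unfolding M psd_mat2_iff b norm_le_square by simp
qed

lemma psd_iff_bloch: "psd A \<longleftrightarrow> hermitian A \<and> norm (bloch_vector A) \<le> bloch_scalar A"
  by (metis bloch_decomposition psd_bloch_form_iff psd_iff_quadratic_form)

section \<open>The effects of the problem in Bloch coordinates\<close>

text \<open>In \<open>E\<close> the sign is the constant matrix \<open>\<plusminus>1 :: complex^2^2\<close>, multiplied entrywise.\<close>
lemma E_bloch_form: "E \<eta> n x = of_real (1/2) *\<^sub>M Id2 + sigma_dot ((if x then \<eta>/2 else - (\<eta>/2)) *\<^sub>R n)"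
proof -
  have "(1::complex^2^2) = mat2 1 1 1 1" by (simp add: mat2_def vec_eq_iff forall_2)
  moreover have "mat2 a b c d * mat2 a' b' c' d' = mat2 (a*a') (b*b') (c*c') (d*d')" for a b c d a' b' c' d'
    by (simp add: mat2_def vec_eq_iff forall_2)
  ultimately show ?thesis
    by (cases x) (simp_all add: E_def Id2_mat2 sigma_dot_mat2 scal_mat2 mat2_add mat2_eq_iff algebra_simps)
qed

lemma bloch_E:
  "hermitian (E \<eta> n x)" "bloch_scalar (E \<eta> n x) = 1/2"
  "bloch_vector (E \<eta> n x) = (if x then \<eta>/2 else - (\<eta>/2)) *\<^sub>R n"
  by (simp_all add: E_bloch_form bloch_simps)

lemma bloch_Gpar:
  "hermitian (Gpar \<eta> ni nj \<alpha> a x y)"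
  "bloch_scalar (Gpar \<eta> ni nj \<alpha> a x y) = (if x = y then \<alpha>/4 else 1/2 - \<alpha>/4)"
  "bloch_vector (Gpar \<eta> ni nj \<alpha> a x y) = (1/4) *\<^sub>R
     (if x \<and> y then \<eta> *\<^sub>R (ni + nj) - a
      else if x \<and> \<not> y then \<eta> *\<^sub>R (ni - nj) + a
      else if \<not> x \<and> y then \<eta> *\<^sub>R (nj - ni) + a
      else - (\<eta> *\<^sub>R (ni + nj)) - a)"
  by (cases x; cases y; simp add: Gpar_def bloch_simps)+

lemma proj_psi_opt_bloch_form: "proj psi_opt = of_real (1/2) *\<^sub>M Id2 + sigma_dot (vector [0, 1/2, 0])"
proof -
  have "complex_of_real (1 / sqrt 2) * complex_of_real (1 / sqrt 2) = 1/2"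
    by (simp flip: of_real_mult)
  then show ?thesis
    by (subst mat2_entries)
      (simp add: proj_def psi_opt_def ket0_def ket1_def Id2_mat2 sigma_dot_mat2 scal_mat2 mat2_add
        mat2_eq_iff algebra_simps)
qed

lemma norm_vector_y: "norm (vector [0, t, 0] :: real^3) = \<bar>t\<bar>"
  by (simp add: norm_eq_sqrt_inner inner_vec3)

lemma density_proj_psi_opt: "density (proj psi_opt)"
proof -
  have "psd (proj psi_opt)"
    unfolding proj_psi_opt_bloch_form psd_bloch_form_iff by (simp add: norm_vector_y)
  moreover have "trace (proj psi_opt) = 1"
    by (simp add: proj_psi_opt_bloch_form Id2_mat2 sigma_dot_mat2 scal_mat2 mat2_add trace_mat2)
  ultimately show ?thesis by (simp add: density_def)
qed

section \<open>The bound for one pair of measurements\<close>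

lemma power2_norm_add: "(norm (x + y))^2 = (norm x)^2 + (norm y)^2 + 2 * (x \<bullet> y)"
  for x y :: "'a::real_inner"
  by (simp add: power2_norm_eq_inner inner_add_left inner_add_right inner_commute)

lemma power2_norm_diff: "(norm (x - y))^2 = (norm x)^2 + (norm y)^2 - 2 * (x \<bullet> y)"
  for x y :: "'a::real_inner"
  by (simp add: power2_norm_eq_inner inner_diff_left inner_diff_right inner_commute)

lemma parallelogram_le:
  fixes z u :: "'a::real_inner"
  assumes "norm (z + u) \<le> s" "norm (z - u) \<le> s"
  shows "(norm z)^2 + (norm u)^2 \<le> s^2"
proof -
  have "(norm (z + u))^2 \<le> s^2" "(norm (z - u))^2 \<le> s^2"
    using assms by (simp_all add: power_mono)
  then show ?thesis
    unfolding power2_norm_add power2_norm_diff by linarith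
qed

text \<open>If \<open>r > c\<close>, both constraints force \<open>t > a\<close> and \<open>1 - t > 1 - a\<close>. Otherwise
  \<open>t \<ge> sqrt (r\<^sup>2 + p) \<ge> r + (a - c)\<close>, because \<open>r \<mapsto> sqrt (r\<^sup>2 + p) - r\<close> is decreasing and equals
  \<open>a - c\<close> at \<open>r = c\<close>.\<close>
lemma sub_le_sub_of_hyperbolic_constraints:
  fixes t r a c p q :: real
  assumes "0 \<le> t" "0 \<le> 1 - t" "0 \<le> c" "0 \<le> a" "0 \<le> 1 - a" "0 \<le> p"
    and a: "a^2 = c^2 + p" "(1 - a)^2 = c^2 + q"
    and t: "r^2 + p \<le> t^2" "r^2 + q \<le> (1 - t)^2"
  shows "a - c \<le> t - r"
proof (cases "r \<le> c")
  case False
  then have "c^2 < r^2" using \<open>0 \<le> c\<close> by (simp add: power_strict_mono)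
  then have "a^2 < t^2" "(1 - a)^2 < (1 - t)^2" using a t by linarith+
  then have "a < t" "1 - a < 1 - t"
    using power_less_imp_less_base \<open>0 \<le> t\<close> \<open>0 \<le> 1 - t\<close> by (metis, metis)
  then show ?thesis by linarith
next
  case True
  have "c^2 \<le> a^2" using a \<open>0 \<le> p\<close> by linarith
  then have "c \<le> a" using \<open>0 \<le> a\<close> by (rule power2_le_imp_le)
  have "(r + (a - c))^2 = r^2 + p + 2 * (a - c) * (r - c)"
    using a by (simp add: power2_eq_square algebra_simps)
  also have "\<dots> \<le> t^2"
  proof -
    have "2 * (a - c) * (r - c) \<le> 0"
      by (rule mult_nonneg_nonpos) (use True \<open>c \<le> a\<close> in simp_all)
    then show ?thesis using t by linarith
  qed
  finally have "r + (a - c) \<le> t" using \<open>0 \<le> t\<close> by (rule power2_le_imp_le)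
  then show ?thesis by simp
qed

lemma sub_norm_ge_of_parallelograms:
  fixes z u v :: "'a::real_inner"
  assumes "norm (z + u) \<le> t" "norm (z - u) \<le> t" "norm (z + v) \<le> 1 - t" "norm (z - v) \<le> 1 - t"
    and "0 \<le> c" "0 \<le> a" "a \<le> 1" "a^2 = c^2 + (norm u)^2" "(1 - a)^2 = c^2 + (norm v)^2"
  shows "a - c \<le> t - norm z"
proof (rule sub_le_sub_of_hyperbolic_constraints)
  show "0 \<le> t" using assms(1) norm_ge_zero[of "z + u"] by linarith
  show "0 \<le> 1 - t" using assms(3) norm_ge_zero[of "z + v"] by linarith
  show "(norm z)^2 + (norm u)^2 \<le> t^2" using parallelogram_le[OF assms(1,2)] .
  show "(norm z)^2 + (norm v)^2 \<le> (1 - t)^2" using parallelogram_le[OF assms(3,4)] .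
qed (use assms in simp_all)

lemma joint_meas_bloch:
  assumes "joint_meas \<eta> ni nj G"
  shows "bloch_scalar (G True False) = 1/2 - bloch_scalar (G True True)"
    "bloch_scalar (G False True) = 1/2 - bloch_scalar (G True True)"
    "bloch_scalar (G False False) = bloch_scalar (G True True)"
    "bloch_vector (G True False) = (\<eta>/2) *\<^sub>R ni - bloch_vector (G True True)"
    "bloch_vector (G False True) = (\<eta>/2) *\<^sub>R nj - bloch_vector (G True True)"
    "bloch_vector (G False False) = bloch_vector (G True True) - (\<eta>/2) *\<^sub>R (ni + nj)"
proof -
  have m: "G True True + G True False = E \<eta> ni True" "G True True + G False True = E \<eta> nj True"
    "G False True + G False False = E \<eta> ni False"
    using assms by (simp_all add: joint_meas_def)
  note s = m[THEN arg_cong[where f = bloch_scalar], unfolded bloch_scalar_add bloch_E]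
  note v = m[THEN arg_cong[where f = bloch_vector], unfolded bloch_vector_add bloch_E]
  show "bloch_scalar (G True False) = 1/2 - bloch_scalar (G True True)"
    "bloch_scalar (G False True) = 1/2 - bloch_scalar (G True True)"
    "bloch_scalar (G False False) = bloch_scalar (G True True)"
    using s by linarith+
  show "bloch_vector (G True False) = (\<eta>/2) *\<^sub>R ni - bloch_vector (G True True)"
    using v(1) by (simp add: algebra_simps)
  show FT: "bloch_vector (G False True) = (\<eta>/2) *\<^sub>R nj - bloch_vector (G True True)"
    using v(2) by (simp add: algebra_simps)
  have "bloch_vector (G False False) = - ((\<eta>/2) *\<^sub>R ni) - bloch_vector (G False True)"
    using v(3) by (simp add: eq_diff_eq add.commute)
  then show "bloch_vector (G False False) = bloch_vector (G True True) - (\<eta>/2) *\<^sub>R (ni + nj)"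
    unfolding FT by (simp add: algebra_simps)
qed

lemma joint_meas_psd:
  assumes "joint_meas \<eta> ni nj G"
  shows "hermitian (G x y)" "norm (bloch_vector (G x y)) \<le> bloch_scalar (G x y)"
  using assms psd_iff_bloch by (simp_all add: joint_meas_def povm4_def)

text \<open>\<open>z\<close> is the Bloch vector of \<open>G\<^sub>+\<^sub>- + G\<^sub>-\<^sub>+\<close>.\<close>
lemma joint_meas_parallelogram_bounds:
  assumes J: "joint_meas \<eta> ni nj G"
  defines "t \<equiv> 2 * bloch_scalar (G True True)"
    and "z \<equiv> (\<eta>/2) *\<^sub>R (ni + nj) - 2 *\<^sub>R bloch_vector (G True True)"
  shows "norm (z + (\<eta>/2) *\<^sub>R (ni + nj)) \<le> t" "norm (z - (\<eta>/2) *\<^sub>R (ni + nj)) \<le> t"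
    "norm (z + (\<eta>/2) *\<^sub>R (ni - nj)) \<le> 1 - t" "norm (z - (\<eta>/2) *\<^sub>R (ni - nj)) \<le> 1 - t"
proof -
  note B = joint_meas_bloch[OF J] and P = joint_meas_psd(2)[OF J]
  have "z + (\<eta>/2) *\<^sub>R (ni + nj) = (-2) *\<^sub>R bloch_vector (G False False)"
    "z - (\<eta>/2) *\<^sub>R (ni + nj) = (-2) *\<^sub>R bloch_vector (G True True)"
    "z + (\<eta>/2) *\<^sub>R (ni - nj) = 2 *\<^sub>R bloch_vector (G True False)"
    "z - (\<eta>/2) *\<^sub>R (ni - nj) = 2 *\<^sub>R bloch_vector (G False True)"
    unfolding z_def B by (simp_all add: vec3_eq_iff algebra_simps)
  then show "norm (z + (\<eta>/2) *\<^sub>R (ni + nj)) \<le> t" "norm (z - (\<eta>/2) *\<^sub>R (ni + nj)) \<le> t"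
    "norm (z + (\<eta>/2) *\<^sub>R (ni - nj)) \<le> 1 - t" "norm (z - (\<eta>/2) *\<^sub>R (ni - nj)) \<le> 1 - t"
    using P[of False False] P[of True True] P[of True False] P[of False True]
    unfolding t_def B by simp_all
qed

lemma density_bloch:
  assumes "density \<rho>"
  shows "hermitian \<rho>" "bloch_scalar \<rho> = 1/2" "norm (bloch_vector \<rho>) \<le> 1/2"
proof -
  have "bloch_scalar \<rho> = Re (trace \<rho>) / 2" by (simp add: bloch_scalar_def trace_def sum_2)
  then show "bloch_scalar \<rho> = 1/2" using assms by (simp add: density_def)
  then show "hermitian \<rho>" "norm (bloch_vector \<rho>) \<le> 1/2"
    using assms psd_iff_bloch by (simp_all add: density_def)
qed

lemma joint_meas_trace_le:
  assumes J: "joint_meas \<eta> ni nj G" and "density \<rho>"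
  shows "Re (trace (\<rho> ** (G True False + G False True)))
    \<le> 1 - 2 * bloch_scalar (G True True)
      + norm ((\<eta>/2) *\<^sub>R (ni + nj) - 2 *\<^sub>R bloch_vector (G True True))"
proof -
  define z where "z = (\<eta>/2) *\<^sub>R (ni + nj) - 2 *\<^sub>R bloch_vector (G True True)"
  note \<rho> = density_bloch[OF assms(2)]
  have "bloch_vector (G True False + G False True) = z"
    unfolding z_def bloch_vector_add joint_meas_bloch[OF J] by (simp add: vec3_eq_iff algebra_simps)
  then have "Re (trace (\<rho> ** (G True False + G False True)))
      = 1 - 2 * bloch_scalar (G True True) + 2 * (bloch_vector \<rho> \<bullet> z)"
    using \<rho> joint_meas_psd(1)[OF J]
    by (simp add: trace_mult_bloch hermitian_add bloch_scalar_add joint_meas_bloch[OF J])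
  also have "2 * (bloch_vector \<rho> \<bullet> z) \<le> norm z"
    using norm_cauchy_schwarz[of "bloch_vector \<rho>" z] mult_right_mono[OF \<rho>(3) norm_ge_zero[of z]]
    by linarith
  finally show ?thesis unfolding z_def by simp
qed

lemma abs_scaled_inner_le_1:
  fixes ni nj :: "'a::real_inner"
  assumes "norm ni = 1" "norm nj = 1" "\<bar>\<eta>\<bar> \<le> 1"
  shows "\<bar>\<eta>^2 * (ni \<bullet> nj)\<bar> \<le> 1"
proof -
  have "\<bar>ni \<bullet> nj\<bar> \<le> 1" using Cauchy_Schwarz_ineq2[of ni nj] assms by simp
  moreover have "\<eta>^2 \<le> 1" using power_mono[OF \<open>\<bar>\<eta>\<bar> \<le> 1\<close> abs_ge_zero, of 2] by simp
  ultimately show ?thesis by (simp add: abs_mult mult_le_one)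
qed

text \<open>The optimal value of \<open>Tr(\<rho>(G\<^sub>+\<^sub>- + G\<^sub>-\<^sub>+))\<close> for one pair with \<open>n\<^sub>i\<cdot>n\<^sub>j = c\<close>.\<close>
definition pair_value :: "real \<Rightarrow> real \<Rightarrow> real" where
  "pair_value \<eta> c = (1 - \<eta>^2 * c + sqrt (1 + \<eta>^4 * c^2 - 2 * \<eta>^2)) / 2"

lemma joint_meas_trace_le_pair_value:
  assumes J: "joint_meas \<eta> ni nj G" and "density \<rho>"
    and unit: "norm ni = 1" "norm nj = 1" and "\<bar>\<eta>\<bar> \<le> 1"
    and radicand: "0 \<le> 1 + \<eta>^4 * (ni \<bullet> nj)^2 - 2 * \<eta>^2"
  shows "Re (trace (\<rho> ** (G True False + G False True))) \<le> pair_value \<eta> (ni \<bullet> nj)"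
proof -
  define c where "c = ni \<bullet> nj"
  define g where "g = 1 + \<eta>^4 * c^2 - 2 * \<eta>^2"
  define a where "a = (1 + \<eta>^2 * c) / 2"
  define h where "h = sqrt g / 2"
  have "\<bar>\<eta>^2 * c\<bar> \<le> 1" unfolding c_def using abs_scaled_inner_le_1 unit \<open>\<bar>\<eta>\<bar> \<le> 1\<close> .
  then have a: "0 \<le> a" "a \<le> 1" by (auto simp: a_def abs_le_iff)
  have h2: "h^2 = g / 4" using radicand by (simp add: h_def g_def c_def power_divide)
  have uv: "(norm ((\<eta>/2) *\<^sub>R (ni + nj)))^2 = \<eta>^2 * (1 + c) / 2"
    "(norm ((\<eta>/2) *\<^sub>R (ni - nj)))^2 = \<eta>^2 * (1 - c) / 2"
    unfolding norm_scaleR power_mult_distrib power2_norm_add power2_norm_diff unit c_def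
    by (simp_all add: power_divide field_simps)
  have "a^2 = h^2 + (norm ((\<eta>/2) *\<^sub>R (ni + nj)))^2"
    "(1 - a)^2 = h^2 + (norm ((\<eta>/2) *\<^sub>R (ni - nj)))^2"
    unfolding h2 uv a_def g_def by (simp_all add: power2_eq_square power4_eq_xxxx field_simps)
  moreover have "0 \<le> h" using radicand by (simp add: h_def g_def c_def)
  ultimately have "a - h \<le> 2 * bloch_scalar (G True True)
      - norm ((\<eta>/2) *\<^sub>R (ni + nj) - 2 *\<^sub>R bloch_vector (G True True))"
    using sub_norm_ge_of_parallelograms[OF joint_meas_parallelogram_bounds[OF J]] a by blast
  then show ?thesis
    using joint_meas_trace_le[OF assms(1,2)]
    by (simp add: pair_value_def a_def h_def g_def c_def field_simps)
qed

section \<open>The optimal joint measurements\<close>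

lemma joint_meas_GparI:
  assumes "norm (\<eta> *\<^sub>R (ni + nj) - a) \<le> \<alpha>" "norm (- (\<eta> *\<^sub>R (ni + nj)) - a) \<le> \<alpha>"
    and "norm (\<eta> *\<^sub>R (ni - nj) + a) \<le> 2 - \<alpha>" "norm (\<eta> *\<^sub>R (nj - ni) + a) \<le> 2 - \<alpha>"
  shows "joint_meas \<eta> ni nj (Gpar \<eta> ni nj \<alpha> a)"
proof -
  let ?G = "Gpar \<eta> ni nj \<alpha> a"
  have "psd (?G x y)" for x y
    using assms by (cases x; cases y) (simp_all add: psd_iff_bloch bloch_Gpar)
  moreover have "?G True True + ?G True False + ?G False True + ?G False False = Id2"
    by (rule hermitian_eqI) (simp_all add: bloch_simps bloch_Gpar vec3_eq_iff algebra_simps)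
  moreover have "?G x True + ?G x False = E \<eta> ni x" for x
    by (rule hermitian_eqI) (cases x; simp add: bloch_simps bloch_Gpar bloch_E vec3_eq_iff algebra_simps)+
  moreover have "?G True y + ?G False y = E \<eta> nj y" for y
    by (rule hermitian_eqI) (cases y; simp add: bloch_simps bloch_Gpar bloch_E vec3_eq_iff algebra_simps)+
  ultimately show ?thesis by (simp add: joint_meas_def povm4_def)
qed

lemma power2_norm_add_vector_y:
  fixes w :: "real^3"
  assumes "w$2 = 0"
  shows "(norm (w + vector [0, t, 0]))^2 = (norm w)^2 + t^2"
    "(norm (w - vector [0, t, 0]))^2 = (norm w)^2 + t^2"
  using assms by (simp_all add: power2_norm_add power2_norm_diff inner_vec3 norm_vector_y)

lemma joint_meas_G_opt:
  assumes unit: "norm ni = 1" "norm nj = 1" and zx: "ni$2 = 0" "nj$2 = 0"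
    and "\<bar>\<eta>\<bar> \<le> 1" and radicand: "0 \<le> 1 + \<eta>^4 * (ni \<bullet> nj)^2 - 2 * \<eta>^2"
  shows "joint_meas \<eta> ni nj (G_opt \<eta> ni nj)"
proof -
  define c where "c = ni \<bullet> nj"
  define a :: "real^3" where "a = vector [0, sqrt (1 + \<eta>^4 * c^2 - 2 * \<eta>^2), 0]"
  have ab: "\<bar>\<eta>^2 * c\<bar> \<le> 1" unfolding c_def using abs_scaled_inner_le_1 unit \<open>\<bar>\<eta>\<bar> \<le> 1\<close> .
  have bound: "norm (w + a) \<le> \<beta>" "norm (w - a) \<le> \<beta>"
    if "w$2 = 0" "(norm w)^2 = \<beta>^2 - (1 + \<eta>^4 * c^2 - 2 * \<eta>^2)" "0 \<le> \<beta>" for w \<beta>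
    using that radicand power2_norm_add_vector_y[OF that(1)] unfolding a_def c_def
    by (simp_all add: norm_le_square power2_norm_eq_inner[symmetric])
  have "(norm (\<eta> *\<^sub>R (ni + nj)))^2 = (1 + \<eta>^2 * c)^2 - (1 + \<eta>^4 * c^2 - 2 * \<eta>^2)"
    "(norm (\<eta> *\<^sub>R (ni - nj)))^2 = (1 - \<eta>^2 * c)^2 - (1 + \<eta>^4 * c^2 - 2 * \<eta>^2)"
    "(norm (\<eta> *\<^sub>R (nj - ni)))^2 = (1 - \<eta>^2 * c)^2 - (1 + \<eta>^4 * c^2 - 2 * \<eta>^2)"
    unfolding norm_scaleR power_mult_distrib power2_norm_add power2_norm_diff unit c_def
    by (simp_all add: inner_commute power2_eq_square power4_eq_xxxx algebra_simps)
  moreover have "0 \<le> 1 + \<eta>^2 * c" "0 \<le> 1 - \<eta>^2 * c" using ab by (simp_all add: abs_le_iff)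
  moreover have "norm (- (\<eta> *\<^sub>R (ni + nj)) - a) = norm (\<eta> *\<^sub>R (ni + nj) + a)"
    by (metis diff_conv_add_uminus minus_add_distrib norm_minus_cancel)
  ultimately have "norm (\<eta> *\<^sub>R (ni + nj) - a) \<le> 1 + \<eta>^2 * c"
    "norm (- (\<eta> *\<^sub>R (ni + nj)) - a) \<le> 1 + \<eta>^2 * c"
    "norm (\<eta> *\<^sub>R (ni - nj) + a) \<le> 2 - (1 + \<eta>^2 * c)"
    "norm (\<eta> *\<^sub>R (nj - ni) + a) \<le> 2 - (1 + \<eta>^2 * c)"
    using bound[of "\<eta> *\<^sub>R (ni + nj)"] bound[of "\<eta> *\<^sub>R (ni - nj)"] bound[of "\<eta> *\<^sub>R (nj - ni)"] zx
    by simp_all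
  then show ?thesis
    unfolding G_opt_def alpha_opt_def a_opt_def c_def[symmetric] a_def[symmetric]
    by (rule joint_meas_GparI)
qed

lemma trace_proj_psi_opt_G_opt:
  "Re (trace (proj psi_opt ** (G_opt \<eta> ni nj True False + G_opt \<eta> ni nj False True)))
     = pair_value \<eta> (ni \<bullet> nj)"
proof -
  have \<psi>: "hermitian (proj psi_opt)" "bloch_scalar (proj psi_opt) = 1/2"
    "bloch_vector (proj psi_opt) = vector [0, 1/2, 0]"
    unfolding proj_psi_opt_bloch_form by (simp_all add: bloch_simps)
  show ?thesis
    unfolding G_opt_def
    by (simp add: \<psi> trace_mult_bloch bloch_simps bloch_Gpar inner_vec3 alpha_opt_def a_opt_def
        pair_value_def field_simps)
qed

section \<open>Trine axes\<close>

lemma sqrt_3_minus_1_le: "sqrt 3 - 1 \<le> (3/4 :: real)"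
proof -
  have "sqrt 3 \<le> sqrt (49/16 :: real)" by (rule real_sqrt_le_mono) simp
  also have "sqrt (49/16 :: real) = 7/4" by (rule real_sqrt_unique) (simp_all add: power2_eq_square)
  finally show ?thesis by simp
qed

lemma trine_eta_range:
  fixes \<eta> :: real
  assumes "2/3 < \<eta>" "\<eta> \<le> sqrt 3 - 1"
  shows "\<bar>\<eta>\<bar> \<le> 1" "0 \<le> 1 + \<eta>^4 * (-1/2)^2 - 2 * \<eta>^2"
proof -
  show "\<bar>\<eta>\<bar> \<le> 1" using assms sqrt_3_minus_1_le by simp
  have "\<eta>^2 \<le> (sqrt 3 - 1)^2" using assms by (simp add: power_mono)
  also have "\<dots> = 4 - 2 * sqrt 3" by (simp add: power2_eq_square algebra_simps)
  finally have "sqrt 3 \<le> 2 - \<eta>^2/2" by simp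
  then have "(sqrt 3)^2 \<le> (2 - \<eta>^2/2)^2" by (rule power_mono) simp
  then show "0 \<le> 1 + \<eta>^4 * (-1/2)^2 - 2 * \<eta>^2"
    by (simp add: power2_eq_square power4_eq_xxxx algebra_simps)
qed

lemma S_le_pair_value:
  assumes unit: "norm n1 = 1" "norm n2 = 1" "norm n3 = 1"
    and trine: "n1 \<bullet> n2 = -1/2" "n2 \<bullet> n3 = -1/2" "n1 \<bullet> n3 = -1/2"
    and \<eta>: "\<bar>\<eta>\<bar> \<le> 1" "0 \<le> 1 + \<eta>^4 * (-1/2)^2 - 2 * \<eta>^2"
    and \<rho>: "density \<rho>"
    and J: "joint_meas \<eta> n1 n2 G12" "joint_meas \<eta> n2 n3 G23" "joint_meas \<eta> n1 n3 G13"
  shows "S \<eta> \<rho> G12 G23 G13 \<le> pair_value \<eta> (-1/2) - (1 - \<eta>/3)"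
  using joint_meas_trace_le_pair_value[OF J(1) \<rho> unit(1,2) \<eta>(1) \<eta>(2)[folded trine(1)]]
    joint_meas_trace_le_pair_value[OF J(2) \<rho> unit(2,3) \<eta>(1) \<eta>(2)[folded trine(2)]]
    joint_meas_trace_le_pair_value[OF J(3) \<rho> unit(1,3) \<eta>(1) \<eta>(2)[folded trine(3)]]
  unfolding S_def trine by (simp add: field_simps)

lemma S_G_opt:
  assumes "n1 \<bullet> n2 = -1/2" "n2 \<bullet> n3 = -1/2" "n1 \<bullet> n3 = -1/2"
  shows "S \<eta> (proj psi_opt) (G_opt \<eta> n1 n2) (G_opt \<eta> n2 n3) (G_opt \<eta> n1 n3)
    = pair_value \<eta> (-1/2) - (1 - \<eta>/3)"
  by (simp add: S_def trace_proj_psi_opt_G_opt assms)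

text \<open>\<open>R\<^sup>2 - g/4\<close> factors as \<open>(\<eta> - 2/3)\<close> times a polynomial that is nonnegative for \<open>\<eta> \<ge> 2/3\<close>,
  where \<open>g\<close> is the radicand in \<open>pair_value \<eta> (-1/2)\<close> and \<open>R\<close> its distance to the bound.\<close>
lemma trine_violation_le:
  fixes \<eta> :: real
  assumes "2/3 \<le> \<eta>" "\<eta> \<le> 3/4"
  shows "pair_value \<eta> (-1/2) - (1 - \<eta>/3) \<le> (1/6) * (sqrt 13 / 3 - 1)"
proof -
  define s where "s = sqrt 13"
  define g where "g = 1 + \<eta>^4 * (-1/2)^2 - 2 * \<eta>^2"
  define R where "R = 1/3 + s/18 - \<eta>^2/4 - \<eta>/3"
  have s: "s^2 = 13" "s \<le> 4" unfolding s_def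
    by (simp_all add: real_sqrt_le_iff[of 13 16, simplified])
  have "3 \<le> s" unfolding s_def by (rule real_le_rsqrt) simp
  have "\<eta>^2 \<le> (3/4)^2" using assms by (intro power_mono) simp_all
  then have "0 \<le> R" unfolding R_def using assms \<open>3 \<le> s\<close> by (simp add: power2_eq_square)
  have "0 \<le> \<eta>^2/6 + (20 - s)/36 * \<eta> + (4/27 - s/18)"
  proof -
    have "(20 - s)/36 * (2/3) \<le> (20 - s)/36 * \<eta>" using assms s by (intro mult_left_mono) simp_all
    moreover have "0 \<le> (20 - s)/36 * (2/3) + (4/27 - s/18)" using s by (simp add: field_simps)
    moreover have "0 \<le> \<eta>^2/6" by simp
    ultimately show ?thesis by linarith
  qed
  then have "0 \<le> (\<eta> - 2/3) * (\<eta>^2/6 + (20 - s)/36 * \<eta> + (4/27 - s/18))"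
    using assms by simp
  also have "\<dots> = R^2 - g/4"
    using s unfolding R_def g_def by (simp add: power2_eq_square power4_eq_xxxx field_simps)
  finally have "sqrt g \<le> sqrt ((2 * R)^2)" by (intro real_sqrt_le_mono) (simp add: power_mult_distrib)
  also have "\<dots> = 2 * R" using \<open>0 \<le> R\<close> by (simp only: real_sqrt_abs)
  finally show ?thesis
    unfolding pair_value_def g_def[symmetric] s_def[symmetric] using R_def by (simp add: field_simps)
qed

lemma sqrt_13_div_81: "sqrt (13/81) = sqrt 13 / (9::real)"
  by (simp add: real_sqrt_divide real_sqrt_unique[of 9 81])

lemma tendsto_trine_violation:
  "((\<lambda>\<eta>. pair_value \<eta> (-1/2) - (1 - \<eta>/3)) \<longlongrightarrow> (1/6) * (sqrt 13 / 3 - 1)) (at_right (2/3))"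
proof -
  have "((\<lambda>\<eta>. pair_value \<eta> (-1/2) - (1 - \<eta>/3)) \<longlongrightarrow> pair_value (2/3) (-1/2) - (1 - (2/3)/3))
      (at_right (2/3))"
    unfolding pair_value_def by (intro tendsto_intros) simp_all
  moreover have "pair_value (2/3) (-1/2) - (1 - (2/3)/3) = (1/6) * (sqrt 13 / 3 - 1)"
    unfolding pair_value_def by (simp add: power4_eq_xxxx power2_eq_square sqrt_13_div_81 field_simps)
  ultimately show ?thesis by (simp only:)
qed

lemma tendsto_alpha_opt:
  assumes "ni \<bullet> nj = -1/2"
  shows "((\<lambda>\<eta>. alpha_opt \<eta> ni nj) \<longlongrightarrow> 7/9) (at_right (2/3))"
proof -
  have "((\<lambda>\<eta>. alpha_opt \<eta> ni nj) \<longlongrightarrow> alpha_opt (2/3) ni nj) (at_right (2/3))"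
    unfolding alpha_opt_def by (intro tendsto_intros)
  then show ?thesis by (simp add: alpha_opt_def assms power2_eq_square)
qed

lemma tendsto_norm_a_opt:
  assumes "ni \<bullet> nj = -1/2"
  shows "((\<lambda>\<eta>. norm (a_opt \<eta> ni nj)) \<longlongrightarrow> sqrt 13 / 9) (at_right (2/3))"
proof -
  have "((\<lambda>\<eta>. norm (a_opt \<eta> ni nj)) \<longlongrightarrow> norm (a_opt (2/3) ni nj)) (at_right (2/3))"
    unfolding a_opt_def norm_vector_y by (intro tendsto_intros)
  then show ?thesis
    by (simp add: a_opt_def norm_vector_y assms power4_eq_xxxx power2_eq_square sqrt_13_div_81)
qed

theorem mainTheorem2:
  fixes n1 n2 n3 :: "real^3"
  assumes unit: "norm n1 = 1" "norm n2 = 1" "norm n3 = 1"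
    and zx: "n1$2 = 0" "n2$2 = 0" "n3$2 = 0"
    and trine: "n1 \<bullet> n2 = -1/2" "n2 \<bullet> n3 = -1/2" "n1 \<bullet> n3 = -1/2"
  shows
    "(\<forall>\<eta>. 2/3 < \<eta> \<and> \<eta> \<le> sqrt 3 - 1 \<longrightarrow>
        density (proj psi_opt) \<and>
        joint_meas \<eta> n1 n2 (G_opt \<eta> n1 n2) \<and>
        joint_meas \<eta> n2 n3 (G_opt \<eta> n2 n3) \<and>
        joint_meas \<eta> n1 n3 (G_opt \<eta> n1 n3) \<and>
        (\<forall>\<rho> G12 G23 G13. density \<rho> \<and> joint_meas \<eta> n1 n2 G12 \<and>
            joint_meas \<eta> n2 n3 G23 \<and> joint_meas \<eta> n1 n3 G13 \<longrightarrow>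
            S \<eta> \<rho> G12 G23 G13
              \<le> S \<eta> (proj psi_opt) (G_opt \<eta> n1 n2) (G_opt \<eta> n2 n3) (G_opt \<eta> n1 n3)))
     \<and> (\<forall>(ni, nj) \<in> {(n1, n2), (n2, n3), (n1, n3)}.
          ((\<lambda>\<eta>. alpha_opt \<eta> ni nj) \<longlongrightarrow> 7/9) (at_right (2/3)) \<and>
          ((\<lambda>\<eta>. norm (a_opt \<eta> ni nj)) \<longlongrightarrow> sqrt 13 / 9) (at_right (2/3)))
     \<and> ((\<lambda>\<eta>. S \<eta> (proj psi_opt) (G_opt \<eta> n1 n2) (G_opt \<eta> n2 n3) (G_opt \<eta> n1 n3))
          \<longlongrightarrow> (1/6) * (sqrt 13 / 3 - 1)) (at_right (2/3))
     \<and> (\<forall>\<eta>. 2/3 < \<eta> \<and> \<eta> \<le> sqrt 3 - 1 \<longrightarrow>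
          S \<eta> (proj psi_opt) (G_opt \<eta> n1 n2) (G_opt \<eta> n2 n3) (G_opt \<eta> n1 n3)
            \<le> (1/6) * (sqrt 13 / 3 - 1))"
proof -
  note S_opt = S_G_opt[OF trine]
  have "density (proj psi_opt) \<and> joint_meas \<eta> n1 n2 (G_opt \<eta> n1 n2) \<and>
      joint_meas \<eta> n2 n3 (G_opt \<eta> n2 n3) \<and> joint_meas \<eta> n1 n3 (G_opt \<eta> n1 n3) \<and>
      (\<forall>\<rho> G12 G23 G13. density \<rho> \<and> joint_meas \<eta> n1 n2 G12 \<and>
          joint_meas \<eta> n2 n3 G23 \<and> joint_meas \<eta> n1 n3 G13 \<longrightarrow>
          S \<eta> \<rho> G12 G23 G13
            \<le> S \<eta> (proj psi_opt) (G_opt \<eta> n1 n2) (G_opt \<eta> n2 n3) (G_opt \<eta> n1 n3))"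
    if "2/3 < \<eta>" "\<eta> \<le> sqrt 3 - 1" for \<eta>
    using density_proj_psi_opt S_le_pair_value[OF unit trine trine_eta_range[OF that]]
      joint_meas_G_opt[OF unit(1,2) zx(1,2) trine_eta_range(1,2)[OF that, folded trine(1)]]
      joint_meas_G_opt[OF unit(2,3) zx(2,3) trine_eta_range(1,2)[OF that, folded trine(2)]]
      joint_meas_G_opt[OF unit(1,3) zx(1,3) trine_eta_range(1,2)[OF that, folded trine(3)]]
    unfolding S_opt by (intro conjI allI impI) auto
  moreover have "S \<eta> (proj psi_opt) (G_opt \<eta> n1 n2) (G_opt \<eta> n2 n3) (G_opt \<eta> n1 n3)
      \<le> (1/6) * (sqrt 13 / 3 - 1)" if "2/3 < \<eta>" "\<eta> \<le> sqrt 3 - 1" for \<eta>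
    unfolding S_opt using that sqrt_3_minus_1_le by (intro trine_violation_le) simp_all
  moreover have "\<forall>(ni, nj) \<in> {(n1, n2), (n2, n3), (n1, n3)}.
      ((\<lambda>\<eta>. alpha_opt \<eta> ni nj) \<longlongrightarrow> 7/9) (at_right (2/3)) \<and>
      ((\<lambda>\<eta>. norm (a_opt \<eta> ni nj)) \<longlongrightarrow> sqrt 13 / 9) (at_right (2/3))"
    using tendsto_alpha_opt tendsto_norm_a_opt trine by auto
  moreover have "((\<lambda>\<eta>. S \<eta> (proj psi_opt) (G_opt \<eta> n1 n2) (G_opt \<eta> n2 n3) (G_opt \<eta> n1 n3))
      \<longlongrightarrow> (1/6) * (sqrt 13 / 3 - 1)) (at_right (2/3))"
    unfolding S_opt by (rule tendsto_trine_violation)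
  ultimately show ?thesis by (intro conjI allI impI) auto
qed

end
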